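(* Consider the following idealized round-based model of Probabilistic Delta Debugging (ProbDD). A finite list $L$ of elements is to be minimized with respect to a property $\psi$ (a predicate on sublists of $L$, true on $L$). Every element $u$ of $L$ carries a probability $u.p$, and initially $u.p = p_0$ for all elements, for a fixed $p_0\in(0,1)$. The algorithm proceeds in rounds $r=1,2,\dots$. In each round a subset size $s$ is fixed, the current list $L$ is partitioned into subsets of size $s$, and each subset $S$ is attempted for deletion in turn: if $\psi(L\setminus S)$ holds, then $L$ is replaced by $L\setminus S$ (the elements of $S$ are removed); otherwise, the probability of each element $u\in S$ is updated to $$u.p \leftarrow \frac{u.p}{1-\prod_{v\in S}(1-v.p)}.$$ Suppose that in every round the number of elements of the current list $L$ is divisible by that round's subset size, so that every subset of the round has exactly $s$ elements. Then after each round, all elements remaining in $L$ have the same probability.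
   Context: In ProbDD, a round is a phase during which every remaining element has been attempted for deletion (as part of some subset) exactly once; the subset size is constant within a round. The probabilities are only modified by the update rule above, which is applied to the elements of a subset whose deletion failed to preserve $\psi$. *)

theory Defs
  imports Complex_Main
begin

type_synonym 'a pstate = "'a list \<times> ('a \<Rightarrow> real)"

fun run_subsets :: "('a list \<Rightarrow> bool) \<Rightarrow> 'a set list \<Rightarrow> 'a pstate \<Rightarrow> 'a pstate" where
  "run_subsets psi [] st = st"
| "run_subsets psi (S # Ss) (L, p) =
     (let L' = filter (\<lambda>x. x \<notin> S) L in
      if psi L' then run_subsets psi Ss (L', p)
      else run_subsets psi Ss
             (L, (\<lambda>u. if u \<in> S then p u / (1 - (\<Prod>v\<in>S. (1 - p v))) else p u)))"

definition is_partition :: "'a list \<Rightarrow> nat \<Rightarrow> 'a set list \<Rightarrow> bool" where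
  "is_partition L s Ss \<longleftrightarrow>
     (\<forall>S\<in>set Ss. card S = s) \<and>
     (\<forall>i<length Ss. \<forall>j<length Ss. i \<noteq> j \<longrightarrow> Ss ! i \<inter> Ss ! j = {}) \<and>
     \<Union>(set Ss) = set L"

inductive probdd_after_rounds ::
  "('a list \<Rightarrow> bool) \<Rightarrow> 'a list \<Rightarrow> real \<Rightarrow> 'a pstate \<Rightarrow> bool"
  for psi L0 p0 where
  init: "probdd_after_rounds psi L0 p0 (L0, (\<lambda>_. p0))"
| round: "probdd_after_rounds psi L0 p0 (L, p) \<Longrightarrow> 0 < s \<Longrightarrow> s dvd length L \<Longrightarrow>
          is_partition L s Ss \<Longrightarrow>
          probdd_after_rounds psi L0 p0 (run_subsets psi Ss (L, p))"

end

theory Submission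
  imports Defs
begin

text \<open>Within a round every subset is tried exactly once and the subsets are disjoint, so an
  element of a subset whose deletion failed is never touched again in that round. If all
  elements share the probability q at the start of the round, the update of a failed subset S
  of size s uses the product (1 - q)^s, hence every surviving element ends the round with
  q / (1 - (1 - q)^s).\<close>

lemma run_subsets_list_subset:
  "set (fst (run_subsets psi Ss (L, p))) \<subseteq> set L"
proof (induction Ss arbitrary: L p)
  case (Cons S Ss)
  show ?case
    using Cons.IH[of "filter (\<lambda>x. x \<notin> S) L"] Cons.IH[of L] by (auto simp: Let_def)
qed simp

lemma run_subsets_prob_outside:
  assumes "u \<notin> \<Union>(set Ss)"
  shows "snd (run_subsets psi Ss (L, p)) u = p u"
  using assms by (induction Ss arbitrary: L p) (auto simp: Let_def)

lemma run_subsets_prob_uniform: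
  assumes "sorted_wrt disjnt Ss" and "\<forall>S\<in>set Ss. card S = s"
    and "\<forall>v\<in>\<Union>(set Ss). p v = q"
    and "u \<in> set (fst (run_subsets psi Ss (L, p)))" and "u \<in> \<Union>(set Ss)"
  shows "snd (run_subsets psi Ss (L, p)) u = q / (1 - (1 - q) ^ s)"
  using assms
proof (induction Ss arbitrary: L p)
  case Nil
  then show ?case by simp
next
  case (Cons S Ss)
  have S_disjnt: "u \<notin> \<Union>(set Ss)" if "u \<in> S"
    using Cons.prems(1) that by (auto simp: disjnt_def)
  define L' where "L' = filter (\<lambda>x. x \<notin> S) L"
  define p' where "p' = (\<lambda>u. if u \<in> S then p u / (1 - (\<Prod>v\<in>S. 1 - p v)) else p u)"
  show ?case
  proof (cases "psi L'")
    case True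
    then have run: "run_subsets psi (S # Ss) (L, p) = run_subsets psi Ss (L', p)"
      by (simp add: L'_def)
    have survives: "u \<in> set (fst (run_subsets psi Ss (L', p)))"
      using Cons.prems(4) unfolding run .
    then have "u \<notin> S"
      using run_subsets_list_subset[of psi Ss L' p] by (auto simp: L'_def)
    then show ?thesis
      unfolding run using Cons.IH[OF _ _ _ survives] Cons.prems(1,2,3,5) by simp
  next
    case False
    then have run: "run_subsets psi (S # Ss) (L, p) = run_subsets psi Ss (L, p')"
      by (simp add: L'_def p'_def)
    have survives: "u \<in> set (fst (run_subsets psi Ss (L, p')))"
      using Cons.prems(4) unfolding run .
    show ?thesis
    proof (cases "u \<in> S")
      case True
      have "(\<Prod>v\<in>S. 1 - p v) = (1 - q) ^ s"
        using Cons.prems(2,3) by (simp add: prod.cong[OF refl, of S _ "\<lambda>_. 1 - q"])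
      then show ?thesis
        unfolding run using True S_disjnt Cons.prems(3)
        by (simp add: run_subsets_prob_outside p'_def)
    next
      case False
      have "\<forall>v\<in>\<Union>(set Ss). p' v = q"
        using Cons.prems(1,3) by (auto simp: p'_def disjnt_def)
      then show ?thesis
        unfolding run using Cons.IH[OF _ _ _ survives] Cons.prems(1,2,5) False by simp
    qed
  qed
qed

lemma is_partition_sorted_wrt_disjnt:
  assumes "is_partition L s Ss"
  shows "sorted_wrt disjnt Ss"
  using assms by (auto simp: is_partition_def sorted_wrt_iff_nth_less disjnt_def)

lemma probdd_after_rounds_prob_uniform:
  assumes "probdd_after_rounds psi L0 p0 (L, p)" and "u \<in> set L" and "v \<in> set L"
  shows "p u = p v"
  using assms
proof (induction "(L, p)" arbitrary: L p u v rule: probdd_after_rounds.induct)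
  case init
  then show ?case by simp
next
  case (round L p s Ss L' p')
  have covers: "\<Union>(set Ss) = set L" and sizes: "\<forall>S\<in>set Ss. card S = s"
    using round.hyps(5) by (auto simp: is_partition_def)
  have survivors:
    "u \<in> set (fst (run_subsets psi Ss (L, p)))" "v \<in> set (fst (run_subsets psi Ss (L, p)))"
    using round.prems round.hyps(6) by (metis fst_conv)+
  then have "u \<in> set L" "v \<in> set L"
    using run_subsets_list_subset[of psi Ss L p] by blast+
  then have "\<forall>w\<in>\<Union>(set Ss). p w = p u"
    using round.hyps(2) covers by blast
  note uniform =
    run_subsets_prob_uniform[OF is_partition_sorted_wrt_disjnt[OF round.hyps(5)] sizes this]
  have "snd (run_subsets psi Ss (L, p)) u = snd (run_subsets psi Ss (L, p)) v"
    using uniform[OF survivors(1)] uniform[OF survivors(2)] covers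
      \<open>u \<in> set L\<close> \<open>v \<in> set L\<close>
    by simp
  then show ?case
    using round.hyps(6) by (metis snd_conv)
qed

theorem lemma1:
  fixes psi :: "'a list \<Rightarrow> bool" and L0 :: "'a list" and p0 :: real
    and L :: "'a list" and p :: "'a \<Rightarrow> real"
  assumes "distinct L0" and "psi L0" and "0 < p0" and "p0 < 1"
    and "probdd_after_rounds psi L0 p0 (L, p)"
  shows "\<forall>u\<in>set L. \<forall>v\<in>set L. p u = p v"
  using probdd_after_rounds_prob_uniform[OF assms(5)] by blast

end
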